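(* Let $K\ge 3$, let $m_1<m_2<\cdots<m_K$ be pairwise co-prime positive integers with $m_1\ge 3$, let $M$ be a positive integer, and set $M_k=Mm_k$ for $k=1,\ldots,K$. Then $$D_2(M_1,\ldots,M_K)=Md,\qquad\text{where}\qquad d=\min_{I\subseteq\{1,\ldots,K\}}\Big\{\prod_{i\in I}m_i+\prod_{i\in\overline I}m_i\Big\},$$ with $\overline I=\{1,\ldots,K\}\setminus I$ and the empty product equal to $1$.
   Context: For a positive integer $n$ and an integer $x$, $\langle x\rangle_n$ denotes the remainder of $x$ modulo $n$, in $\{0,\ldots,n-1\}$, and $\mathbb Z_n=\{0,1,\ldots,n-1\}$. An $L$-set is a set with exactly $L$ elements. For a finite set $\mathcal A$ of nonnegative integers and a modulus $n_k$, the residue set is $R_k(\mathcal A)=\{\langle a\rangle_{n_k}: a\in\mathcal A\}$ (an unordered set, so repetitions collapse). For a modulus set $\mathcal N=\{n_1,\ldots,n_K\}$, the dynamic range $D_L(\mathcal N)=D_L(n_1,\ldots,n_K)$ is the minimal positive integer $D$ such that there exist two different $L$-sets $\mathcal A,\mathcal B\subseteq\mathbb Z_{D+1}$ with $R_k(\mathcal A)=R_k(\mathcal B)$ for every $k=1,\ldots,K$ (residues taken modulo $n_k$). *)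

theory Defs
  imports Main
begin

definition residue_set :: "nat \<Rightarrow> nat set \<Rightarrow> nat set" where
  "residue_set n A = (\<lambda>a. a mod n) ` A"

definition dynamic_range :: "nat \<Rightarrow> nat \<Rightarrow> (nat \<Rightarrow> nat) \<Rightarrow> nat" where
  "dynamic_range L K n = (LEAST D. 0 < D \<and>
     (\<exists>A B. A \<noteq> B \<and> card A = L \<and> card B = L \<and> A \<subseteq> {0..D} \<and> B \<subseteq> {0..D} \<and>
        (\<forall>k\<in>{1..K}. residue_set (n k) A = residue_set (n k) B)))"

end

theory Submission
  imports Defs
begin

text \<open>Write P I for the product of the m i over I and I' for the complement of I.
  Two pairs {a1, a2}, {b1, b2} with equal residue sets modulo M m k are matched either
  straight (a1 \<equiv> b1, a2 \<equiv> b2) or crossed (a1 \<equiv> b2, a2 \<equiv> b1) modulo each M m k.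
  If I collects the straight indices, coprimality makes a1 - b1 and a2 - b2 divisible by
  M P I and a1 - b2, a2 - b1 divisible by M P I'. Then either both divide a1 + a2 - b1 - b2 \<noteq> 0,
  so 2 D \<ge> M P I P I' \<ge> 2 M d, or a1 - b1 and a1 - b2 have absolute values summing to at
  most D, so D \<ge> M (P I + P I') \<ge> M d. Conversely, for a minimising I the pairs
  {0, M (P I + P I')} and {M P I, M P I'} have equal residue sets.\<close>

lemma residue_set_doubleton_eqD:
  assumes "residue_set n {a1, a2} = residue_set n {b1, b2}"
  shows "a1 mod n = b1 mod n \<and> a2 mod n = b2 mod n \<or> a1 mod n = b2 mod n \<and> a2 mod n = b1 mod n"
  using assms unfolding residue_set_def by (simp add: doubleton_eq_iff)

lemma residue_set_doubleton_sum:
  assumes "n dvd a"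
  shows "residue_set n {0, a + b} = residue_set n {a, b}"
  using assms unfolding residue_set_def by (auto simp: mod_add_left_eq[symmetric])

lemma prod_dvd_of_pairwise_coprime:
  fixes f :: "'a \<Rightarrow> 'b::semiring_gcd"
  assumes "finite I" "\<And>i j. i \<in> I \<Longrightarrow> j \<in> I \<Longrightarrow> i \<noteq> j \<Longrightarrow> coprime (f i) (f j)"
    and "\<And>i. i \<in> I \<Longrightarrow> f i dvd x"
  shows "prod f I dvd x"
  using assms
proof (induction I rule: finite_induct)
  case (insert i I)
  have "coprime (f i) (prod f I)"
    using insert.prems(1) insert.hyps(2) by (intro prod_coprime_right) auto
  with insert show ?case by (simp add: divides_mult)
qed simp

lemma mult_prod_dvd_of_pairwise_coprime:
  fixes f :: "'a \<Rightarrow> 'b::ring_gcd"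
  assumes "finite I" "I \<noteq> {}" "c \<noteq> 0"
    and "\<And>i j. i \<in> I \<Longrightarrow> j \<in> I \<Longrightarrow> i \<noteq> j \<Longrightarrow> coprime (f i) (f j)"
    and "\<And>i. i \<in> I \<Longrightarrow> c * f i dvd x"
  shows "c * prod f I dvd x"
proof -
  obtain i where "i \<in> I" using assms(2) by blast
  then obtain t where t: "x = c * t" using assms(5) dvd_mult_left by blast
  have "prod f I dvd t"
  proof (rule prod_dvd_of_pairwise_coprime[OF assms(1,4)])
    fix i assume "i \<in> I"
    then show "f i dvd t" using assms(3) assms(5)[of i] t by simp
  qed
  then show ?thesis using t by (simp add: mult_dvd_mono)
qed

lemma mod_eq_imp_int_dvd_diff:
  fixes x y n :: nat
  assumes "x mod n = y mod n"
  shows "int n dvd int x - int y"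
  using assms by (metis mod_eq_dvd_iff of_nat_mod)

lemma dvd_diff_le_bound:
  fixes x y D X :: nat
  assumes "int X dvd int x - int y" "x \<noteq> y" "x \<le> D" "y \<le> D"
  shows "X \<le> D"
proof -
  have "\<bar>int X\<bar> \<le> \<bar>int x - int y\<bar>" using assms(1,2) by (intro dvd_imp_le_int) auto
  then show ?thesis using assms(3,4) by linarith
qed

lemma parallel_congruences_bound:
  fixes a1 a2 b1 b2 D X :: nat
  assumes "{a1, a2} \<noteq> {b1, b2}" "a1 \<le> D" "a2 \<le> D" "b1 \<le> D" "b2 \<le> D"
    and "int X dvd int a1 - int b1" "int X dvd int a2 - int b2"
  shows "X \<le> D"
proof (cases "a1 = b1")
  case True
  then show ?thesis using assms dvd_diff_le_bound[of X a2 b2 D] by auto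
qed (use assms dvd_diff_le_bound[of X a1 b1 D] in auto)

text \<open>If a1 + a2 \<noteq> b1 + b2, both X and Y divide the nonzero difference of the sums;
  otherwise a1 - b1 and a1 - b2 are nonzero and their absolute values add up to
  \<bar>a1 - a2\<bar> or to \<bar>b1 - b2\<bar>.\<close>
lemma crossed_congruences_bound:
  fixes a1 a2 b1 b2 D X Y :: nat
  assumes "{a1, a2} \<noteq> {b1, b2}" "a1 \<le> D" "a2 \<le> D" "b1 \<le> D" "b2 \<le> D"
    and X: "int X dvd int a1 - int b1" "int X dvd int a2 - int b2"
    and Y: "int Y dvd int a1 - int b2" "int Y dvd int a2 - int b1"
  shows "X + Y \<le> D \<or> lcm X Y \<le> 2 * D"
proof (cases "a1 + a2 = b1 + b2")
  case True
  define u where "u = int a1 - int b1"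
  define w where "w = int a1 - int b2"
  have "u \<noteq> 0" "w \<noteq> 0" using True assms(1) by (auto simp: u_def w_def)
  then have "int X \<le> \<bar>u\<bar>" "int Y \<le> \<bar>w\<bar>"
    using dvd_imp_le_int[of u "int X"] dvd_imp_le_int[of w "int Y"] X(1) Y(1)
    by (auto simp: u_def w_def)
  moreover have "\<bar>u\<bar> + \<bar>w\<bar> = \<bar>u + w\<bar> \<or> \<bar>u\<bar> + \<bar>w\<bar> = \<bar>u - w\<bar>" by (auto simp: abs_if)
  moreover have "u + w = int a1 - int a2" "u - w = int b2 - int b1"
    using True by (simp_all add: u_def w_def)
  ultimately show ?thesis using assms(2-5) by linarith
next
  case False
  define s where "s = int a1 + int a2 - int b1 - int b2"
  have "int X dvd s" "int Y dvd s"
    using dvd_add[OF X] dvd_add[OF Y] by (simp_all add: s_def algebra_simps)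
  moreover have "s \<noteq> 0" using False by (simp add: s_def)
  ultimately have "\<bar>lcm (int X) (int Y)\<bar> \<le> \<bar>s\<bar>" by (intro dvd_imp_le_int lcm_least)
  moreover have "\<bar>s\<bar> \<le> 2 * int D" unfolding s_def using assms(2-5) by linarith
  ultimately show ?thesis by simp
qed

definition residue_ambiguous :: "nat \<Rightarrow> nat \<Rightarrow> (nat \<Rightarrow> nat) \<Rightarrow> nat \<Rightarrow> bool" where
  "residue_ambiguous L K n D \<longleftrightarrow>
     (\<exists>A B. A \<noteq> B \<and> card A = L \<and> card B = L \<and> A \<subseteq> {0..D} \<and> B \<subseteq> {0..D} \<and>
        (\<forall>k\<in>{1..K}. residue_set (n k) A = residue_set (n k) B))"

lemma residue_ambiguous_pos:
  assumes "residue_ambiguous L K n D" "2 \<le> L"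
  shows "0 < D"
proof -
  obtain A where "card A = L" "A \<subseteq> {0..D}"
    using assms(1) unfolding residue_ambiguous_def by blast
  then have "L \<le> D + 1" using card_mono[of "{0..D}" A] by simp
  then show ?thesis using assms(2) by simp
qed

lemma dynamic_range_eqI:
  assumes "2 \<le> L" "residue_ambiguous L K n D"
    and "\<And>D'. residue_ambiguous L K n D' \<Longrightarrow> D \<le> D'"
  shows "dynamic_range L K n = D"
  unfolding dynamic_range_def residue_ambiguous_def[symmetric]
  by (rule Least_equality) (use assms residue_ambiguous_pos in auto)

locale coprime_moduli =
  fixes K M :: nat and m :: "nat \<Rightarrow> nat"
  assumes K_ge_3: "K \<ge> 3"
    and m_ge_3: "\<And>k. k \<in> {1..K} \<Longrightarrow> m k \<ge> 3"
    and coprime_m: "\<And>i j. i \<in> {1..K} \<Longrightarrow> j \<in> {1..K} \<Longrightarrow> i \<noteq> j \<Longrightarrow> coprime (m i) (m j)"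
    and M_pos: "M > 0"
begin

definition split_sum :: "nat set \<Rightarrow> nat" where
  "split_sum I = prod m I + prod m ({1..K} - I)"

definition min_split_sum :: nat where
  "min_split_sum = Min (split_sum ` Pow {1..K})"

lemma prod_m_pos: "I \<subseteq> {1..K} \<Longrightarrow> 0 < prod m I"
  using m_ge_3 by (intro prod_pos) force

lemma prod_m_mono: "I \<subseteq> J \<Longrightarrow> J \<subseteq> {1..K} \<Longrightarrow> prod m I \<le> prod m J"
  by (intro dvd_imp_le prod_dvd_prod_subset prod_m_pos) (auto intro: finite_subset)

lemma coprime_prod_m_complement:
  "I \<subseteq> {1..K} \<Longrightarrow> coprime (prod m I) (prod m ({1..K} - I))"
  by (intro prod_coprime_left prod_coprime_right coprime_m) auto

lemma prod_m_complement: "I \<subseteq> {1..K} \<Longrightarrow> prod m I * prod m ({1..K} - I) = prod m {1..K}"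
  by (simp add: prod.subset_diff mult.commute)

lemma min_split_sum_le: "I \<subseteq> {1..K} \<Longrightarrow> min_split_sum \<le> split_sum I"
  unfolding min_split_sum_def by (intro Min_le) auto

lemma min_split_sum_attained: "\<exists>I\<subseteq>{1..K}. split_sum I = min_split_sum"
proof -
  have "min_split_sum \<in> split_sum ` Pow {1..K}"
    unfolding min_split_sum_def by (rule Min_in) auto
  then show ?thesis by auto
qed

text \<open>Splitting off m 1 gives 2 (a + b) \<le> a b with a = m 1 \<ge> 3 and b \<ge> m 2 m 3 \<ge> 9.\<close>
lemma twice_min_split_sum_le: "2 * min_split_sum \<le> prod m {1..K}"
proof -
  define a where "a = m 1"
  define b where "b = prod m {2..K}"
  have "a \<ge> 3" using m_ge_3 K_ge_3 by (simp add: a_def)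
  have "3 * 3 \<le> m 2 * m 3" using m_ge_3 K_ge_3 by (intro mult_mono) auto
  also have "\<dots> \<le> b" using prod_m_mono[of "{2, 3}" "{2..K}"] K_ge_3 by (simp add: b_def)
  finally have "b \<ge> 6" by simp
  have "{1..K} - {1} = {2..K}" by auto
  then have split_1: "split_sum {1} = a + b" "prod m {1..K} = a * b"
    using K_ge_3 prod_m_complement[of "{1}"] by (simp_all add: split_sum_def a_def b_def)
  have "2 * min_split_sum \<le> 2 * (a + b)"
    using min_split_sum_le[of "{1}"] K_ge_3 split_1 by simp
  also have "\<dots> \<le> a * b"
  proof -
    have "(int a - 2) * (int b - 2) \<ge> 1 * 4"
      using \<open>a \<ge> 3\<close> \<open>b \<ge> 6\<close> by (intro mult_mono) auto
    then have "int (2 * (a + b)) \<le> int (a * b)" by (simp add: algebra_simps)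
    then show ?thesis by linarith
  qed
  finally show ?thesis using split_1 by simp
qed

lemma int_mult_prod_m_dvd:
  assumes "S \<subseteq> {1..K}" "S \<noteq> {}" "\<And>k. k \<in> S \<Longrightarrow> int (M * m k) dvd x"
  shows "int (M * prod m S) dvd x"
proof -
  have "int M * (\<Prod>k\<in>S. int (m k)) dvd x"
  proof (rule mult_prod_dvd_of_pairwise_coprime)
    show "coprime (int (m i)) (int (m j))" if "i \<in> S" "j \<in> S" "i \<noteq> j" for i j
    proof -
      have "i \<in> {1..K}" "j \<in> {1..K}" using that(1,2) assms(1) by blast+
      then show ?thesis using that(3) by (simp add: coprime_m)
    qed
  qed (use assms M_pos in \<open>auto intro: finite_subset\<close>)
  then show ?thesis by simp
qed

lemma lcm_mult_prod_m_complement: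
  assumes "I \<subseteq> {1..K}"
  shows "lcm (M * prod m I) (M * prod m ({1..K} - I)) = M * prod m {1..K}"
  using coprime_prod_m_complement[OF assms] prod_m_complement[OF assms]
  by (simp add: lcm_mult_left lcm_coprime)

lemma residue_ambiguous_at_min_split_sum:
  "residue_ambiguous 2 K (\<lambda>k. M * m k) (M * min_split_sum)"
proof -
  obtain I where I: "I \<subseteq> {1..K}" "split_sum I = min_split_sum"
    using min_split_sum_attained by blast
  define p where "p = prod m I"
  define q where "q = prod m ({1..K} - I)"
  have "0 < p" "0 < q" unfolding p_def q_def using I(1) by (blast intro: prod_m_pos)+
  have "p \<noteq> q"
  proof
    assume "p = q"
    then have "p * q = 1" using coprime_prod_m_complement[OF I(1)] by (simp add: p_def q_def)
    moreover have "m 1 \<le> p * q"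
      using prod_m_mono[of "{1}" "{1..K}"] prod_m_complement[OF I(1)] K_ge_3 by (simp add: p_def q_def)
    ultimately show False using m_ge_3[of 1] K_ge_3 by simp
  qed
  define A where "A = {0, M * p + M * q}"
  define B where "B = {M * p, M * q}"
  have "residue_set (M * m k) A = residue_set (M * m k) B" if "k \<in> {1..K}" for k
  proof (cases "k \<in> I")
    case True
    then have "M * m k dvd M * p" using I(1) by (auto simp: p_def intro: finite_subset)
    then show ?thesis by (simp add: A_def B_def residue_set_doubleton_sum)
  next
    case False
    then have "M * m k dvd M * q" using that by (auto simp: q_def)
    then have "residue_set (M * m k) {0, M * q + M * p} = residue_set (M * m k) {M * q, M * p}"
      by (rule residue_set_doubleton_sum)
    then show ?thesis by (simp add: A_def B_def add.commute insert_commute)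
  qed
  moreover have "M * min_split_sum = M * p + M * q"
    using I(2) unfolding split_sum_def p_def q_def by (metis add_mult_distrib2)
  then have "A \<subseteq> {0..M * min_split_sum}" "B \<subseteq> {0..M * min_split_sum}"
    by (auto simp: A_def B_def)
  moreover have "card A = 2" "card B = 2" "A \<noteq> B"
    using M_pos \<open>0 < p\<close> \<open>0 < q\<close> \<open>p \<noteq> q\<close> by (auto simp: A_def B_def doubleton_eq_iff)
  ultimately show ?thesis unfolding residue_ambiguous_def by blast
qed

lemma min_split_sum_le_if_ambiguous:
  assumes "residue_ambiguous 2 K (\<lambda>k. M * m k) D"
  shows "M * min_split_sum \<le> D"
proof -
  obtain A B where "A \<noteq> B" "card A = 2" "card B = 2" "A \<subseteq> {0..D}" "B \<subseteq> {0..D}"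
    and res_AB: "\<forall>k\<in>{1..K}. residue_set (M * m k) A = residue_set (M * m k) B"
    using assms unfolding residue_ambiguous_def by blast
  then obtain a1 a2 b1 b2 where AB: "A = {a1, a2}" "B = {b1, b2}" by (meson card_2_iff)
  have ne: "{a1, a2} \<noteq> {b1, b2}" using \<open>A \<noteq> B\<close> AB by simp
  have bounds: "a1 \<le> D" "a2 \<le> D" "b1 \<le> D" "b2 \<le> D"
    using \<open>A \<subseteq> {0..D}\<close> \<open>B \<subseteq> {0..D}\<close> AB by auto
  have res: "residue_set (M * m k) {a1, a2} = residue_set (M * m k) {b1, b2}" if "k \<in> {1..K}" for k
    using res_AB that AB by simp
  define I where "I = {k \<in> {1..K}. a1 mod (M * m k) = b1 mod (M * m k) \<and> a2 mod (M * m k) = b2 mod (M * m k)}"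
  define J where "J = {1..K} - I"
  have "I \<subseteq> {1..K}" "J \<subseteq> {1..K}" by (auto simp: I_def J_def)
  have I_dvd: "int (M * prod m I) dvd int a1 - int b1 \<and> int (M * prod m I) dvd int a2 - int b2"
    if "I \<noteq> {}"
  proof -
    have "int (M * m k) dvd int a1 - int b1 \<and> int (M * m k) dvd int a2 - int b2" if "k \<in> I" for k
      using that mod_eq_imp_int_dvd_diff unfolding I_def by blast
    then show ?thesis using int_mult_prod_m_dvd[OF \<open>I \<subseteq> {1..K}\<close> that] by blast
  qed
  have "a1 mod (M * m k) = b2 mod (M * m k) \<and> a2 mod (M * m k) = b1 mod (M * m k)" if "k \<in> J" for k
    using residue_set_doubleton_eqD[OF res, of k] that by (auto simp: I_def J_def)
  then have "int (M * m k) dvd int a1 - int b2 \<and> int (M * m k) dvd int a2 - int b1" if "k \<in> J" for k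
    using that mod_eq_imp_int_dvd_diff by blast
  then have J_dvd: "int (M * prod m J) dvd int a1 - int b2 \<and> int (M * prod m J) dvd int a2 - int b1"
    if "J \<noteq> {}"
    using int_mult_prod_m_dvd[OF \<open>J \<subseteq> {1..K}\<close> that] by blast
  have "M * prod m {1..K} \<le> 2 * D \<or> M * split_sum I \<le> D"
  proof -
    consider "J = {}" | "I = {}" | "I \<noteq> {}" "J \<noteq> {}" by blast
    then show ?thesis
    proof cases
      case 1
      then have "I = {1..K}" using \<open>I \<subseteq> {1..K}\<close> by (auto simp: J_def)
      then have "M * prod m {1..K} \<le> D"
        using parallel_congruences_bound[OF ne bounds] I_dvd K_ge_3 by auto
      then show ?thesis by simp
    next
      case 2
      then have "J = {1..K}" by (simp add: J_def)
      moreover have "{a1, a2} \<noteq> {b2, b1}" using ne by (simp add: insert_commute)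
      ultimately have "M * prod m {1..K} \<le> D"
        using parallel_congruences_bound[of a1 a2 b2 b1] bounds J_dvd K_ge_3 by auto
      then show ?thesis by simp
    next
      case 3
      have "M * prod m I + M * prod m J \<le> D \<or> lcm (M * prod m I) (M * prod m J) \<le> 2 * D"
        using crossed_congruences_bound[OF ne bounds] I_dvd[OF 3(1)] J_dvd[OF 3(2)] by blast
      then show ?thesis
        using lcm_mult_prod_m_complement[OF \<open>I \<subseteq> {1..K}\<close>] by (auto simp: split_sum_def J_def add_mult_distrib2)
    qed
  qed
  moreover have "M * (2 * min_split_sum) \<le> M * prod m {1..K}"
    using twice_min_split_sum_le by (rule mult_le_mono2)
  moreover have "M * min_split_sum \<le> M * split_sum I"
    using min_split_sum_le[OF \<open>I \<subseteq> {1..K}\<close>] by (rule mult_le_mono2)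
  ultimately show ?thesis by linarith
qed

end

theorem theorem1:
  fixes K M :: nat and m :: "nat \<Rightarrow> nat"
  assumes "K \<ge> 3"
    and "\<And>i j. i \<in> {1..K} \<Longrightarrow> j \<in> {1..K} \<Longrightarrow> i < j \<Longrightarrow> m i < m j"
    and "\<And>i j. i \<in> {1..K} \<Longrightarrow> j \<in> {1..K} \<Longrightarrow> i \<noteq> j \<Longrightarrow> coprime (m i) (m j)"
    and "m 1 \<ge> 3"
    and "M > 0"
  shows "dynamic_range 2 K (\<lambda>k. M * m k) =
    M * Min ((\<lambda>I. (\<Prod>i\<in>I. m i) + (\<Prod>i\<in>{1..K} - I. m i)) ` Pow {1..K})"
proof -
  have "m k \<ge> 3" if "k \<in> {1..K}" for k
    using assms(2)[of 1 k] assms(1,4) that by (cases "k = 1") auto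
  then interpret coprime_moduli K M m
    using assms(1,3,5) by unfold_locales auto
  have "split_sum = (\<lambda>I. (\<Prod>i\<in>I. m i) + (\<Prod>i\<in>{1..K} - I. m i))"
    by (simp add: split_sum_def fun_eq_iff)
  moreover have "dynamic_range 2 K (\<lambda>k. M * m k) = M * min_split_sum"
    by (intro dynamic_range_eqI residue_ambiguous_at_min_split_sum min_split_sum_le_if_ambiguous) simp
  ultimately show ?thesis by (simp add: min_split_sum_def)
qed

end
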